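(* Let $b\ge 1$, $k\ge 1$, $1\le s\le k$ be integers. Then $\sigma_{k}^{(b+1)}(t;s)=\sigma_{k}^{(b)}(t;s)$ for every integer $t$.
   Context: For a positive integer $m$, $(q)_m=(1-q)\cdots(1-q^m)$, $(q)_0=1$. For integers $b\ge 0$, $k\ge1$ and $1\le s\le k$, let $R^{(b)}_{k,s}(q)=\sum_{t=0}^{k-1}\sigma^{(b)}_k(t;s)q^t$ be the remainder of $\frac{1}{k^b}(q)_{k-1}^{\,b}(q)_{s-1}$ upon division by $1-q^k$; the values $\sigma^{(b)}_k(t;s)$ are extended to all integers $t$ by $k$-periodicity. *)

theory Defs
  imports "HOL-Computational_Algebra.Polynomial"
begin

definition qpoch :: "nat \<Rightarrow> rat poly" where
  "qpoch m = (\<Prod>i\<in>{1..m}. 1 - monom 1 i)"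

definition Rrem :: "nat \<Rightarrow> nat \<Rightarrow> nat \<Rightarrow> rat poly" where
  "Rrem b k s = (smult (1 / of_nat k ^ b) (qpoch (k - 1) ^ b * qpoch (s - 1))) mod (1 - monom 1 k)"

definition sigma :: "nat \<Rightarrow> nat \<Rightarrow> int \<Rightarrow> nat \<Rightarrow> rat" where
  "sigma b k t s = coeff (Rrem b k s) (nat (t mod int k))"

end

theory Submission
  imports Defs
begin

text \<open>Put e = (q)_{k-1} / k. At a primitive k-th root of unity w the powers w^i, i < k, are all
  the roots of x^k - 1, so (q)_{k-1} takes the value prod (1 - w^i) = k there, while at every other
  k-th root of unity one of its factors vanishes. Hence (q)_{k-1}^2 - k (q)_{k-1} vanishes at the k
  distinct roots of 1 - q^k, i.e. e is idempotent modulo 1 - q^k, and R^(b) = e^b (q)_{s-1} mod (1 - q^k)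
  is the same for all b >= 1.\<close>

lemma map_poly_of_rat_add:
  "map_poly (of_rat :: rat \<Rightarrow> 'a::field_char_0) (p + q) = map_poly of_rat p + map_poly of_rat q"
  by (rule poly_eqI) (simp add: coeff_map_poly of_rat_add)

lemma map_poly_of_rat_diff:
  "map_poly (of_rat :: rat \<Rightarrow> 'a::field_char_0) (p - q) = map_poly of_rat p - map_poly of_rat q"
  by (rule poly_eqI) (simp add: coeff_map_poly of_rat_diff)

lemma map_poly_of_rat_mult:
  "map_poly (of_rat :: rat \<Rightarrow> 'a::field_char_0) (p * q) = map_poly of_rat p * map_poly of_rat q"
  by (rule poly_eqI) (simp add: coeff_map_poly coeff_mult of_rat_sum of_rat_mult)

lemma map_poly_of_rat_prod:
  "map_poly (of_rat :: rat \<Rightarrow> 'a::field_char_0) (\<Prod>i\<in>A. f i) = (\<Prod>i\<in>A. map_poly of_rat (f i))"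
  by (induction A rule: infinite_finite_induct) (simp_all add: map_poly_of_rat_mult)

lemma map_poly_of_rat_smult:
  "map_poly (of_rat :: rat \<Rightarrow> 'a::field_char_0) (smult c p) = smult (of_rat c) (map_poly of_rat p)"
  by (rule map_poly_smult) (simp_all add: of_rat_mult)

lemma monom_minus_one_eq_prod_powers:
  fixes w :: "'a::idom"
  assumes "k \<ge> 1" "w ^ k = 1" "inj_on (\<lambda>i. w ^ i) {..<k}"
  shows "monom 1 k - 1 = (\<Prod>i<k. [:- (w ^ i), 1:])"
proof (rule poly_eqI_degree_lead_coeff)
  have "degree (\<Prod>i<k. [:- (w ^ i), 1:]) = k"
    by (subst degree_prod_eq_sum_degree) auto
  moreover have "lead_coeff (\<Prod>i<k. [:- (w ^ i), 1:]) = 1"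
    by (simp add: lead_coeff_prod)
  ultimately show "coeff (monom 1 k - 1) k = coeff (\<Prod>i<k. [:- (w ^ i), 1:]) k"
    using assms(1) by simp
  show "card ((\<lambda>i. w ^ i) ` {..<k}) \<ge> k"
    using card_image[OF assms(3)] by simp
  show "degree (monom 1 k - 1 :: 'a poly) \<le> k"
    using degree_diff_le_max[of "monom 1 k" 1] by (simp add: degree_monom_eq)
  show "degree (\<Prod>i<k. [:- (w ^ i), 1:]) \<le> k"
    by (subst degree_prod_eq_sum_degree) auto
  fix z assume "z \<in> (\<lambda>i. w ^ i) ` {..<k}"
  then obtain j where "j < k" "z = w ^ j" by auto
  moreover have "(w ^ j) ^ k = 1"
    by (metis assms(2) power_mult mult.commute power_one)
  ultimately show "poly (monom 1 k - 1) z = poly (\<Prod>i<k. [:- (w ^ i), 1:]) z"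
    by (auto simp: poly_monom poly_prod)
qed

lemma prod_one_minus_primitive_root_powers:
  fixes w :: "'a::idom"
  assumes "k \<ge> 1" "w ^ k = 1" and primitive: "\<And>d. 1 \<le> d \<Longrightarrow> d < k \<Longrightarrow> w ^ d \<noteq> 1"
  shows "(\<Prod>i\<in>{1..k-1}. 1 - w ^ i) = of_nat k"
proof -
  have "w \<noteq> 0"
    using assms(1,2) by (cases k) auto
  have "inj_on (\<lambda>i. w ^ i) {..<k}"
  proof (rule linorder_inj_onI')
    fix i j assume "i \<in> {..<k}" "j \<in> {..<k}" "i < j"
    then have "w ^ (j - i) \<noteq> 1"
      by (intro primitive) auto
    moreover have "w ^ j = w ^ i * w ^ (j - i)"
      using \<open>i < j\<close> by (simp flip: power_add)
    ultimately show "w ^ i \<noteq> w ^ j"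
      using \<open>w \<noteq> 0\<close> by auto
  qed
  have "[:-1, 1:] * (\<Sum>i<k. [:0, 1:] ^ i) = (monom 1 k - 1 :: 'a poly)"
    using power_diff_1_eq[of "[:0, 1::'a:]" k] by (simp add: monom_altdef one_pCons)
  also have "\<dots> = (\<Prod>i<k. [:- (w ^ i), 1:])"
    by (rule monom_minus_one_eq_prod_powers) fact+
  also have "\<dots> = [:-1, 1:] * (\<Prod>i\<in>{1..k-1}. [:- (w ^ i), 1:])"
  proof -
    have "{..<k} = insert 0 {1..k-1}"
      using assms(1) by auto
    then show ?thesis
      by simp
  qed
  finally have "(\<Sum>i<k. [:0, 1:] ^ i) = (\<Prod>i\<in>{1..k-1}. [:- (w ^ i), 1:])"
    by (metis mult_left_cancel pCons_eq_0_iff one_neq_zero)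
  from arg_cong[where f = "\<lambda>p. poly p 1", OF this] show ?thesis
    by (simp add: poly_sum poly_prod)
qed

lemma prod_one_minus_root_of_unity_powers_sq:
  fixes w :: "'a::idom"
  assumes "k \<ge> 1" "w ^ k = 1"
  shows "(\<Prod>i\<in>{1..k-1}. 1 - w ^ i) ^ 2 = of_nat k * (\<Prod>i\<in>{1..k-1}. 1 - w ^ i)"
proof (cases "\<exists>d\<in>{1..k-1}. w ^ d = 1")
  case True
  then have zero: "(\<Prod>i\<in>{1..k-1}. 1 - w ^ i) = 0"
    by force
  show ?thesis
    unfolding zero by simp
next
  case False
  then have "(\<Prod>i\<in>{1..k-1}. 1 - w ^ i) = of_nat k"
    using assms by (intro prod_one_minus_primitive_root_powers) auto
  then show ?thesis
    by (simp add: power2_eq_square)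
qed

lemma one_minus_monom_dvd_if_vanishes_at_roots_of_unity:
  fixes p :: "rat poly"
  assumes "k \<ge> 1" and vanishes: "\<And>z::complex. z ^ k = 1 \<Longrightarrow> poly (map_poly of_rat p) z = 0"
  shows "(1 - monom 1 k) dvd p"
proof -
  define m :: "rat poly" where "m = 1 - monom 1 k"
  define r where "r = p mod m"
  have "degree m = k"
    using assms(1) degree_add_eq_right[of 1 "- monom 1 k"] by (simp add: m_def degree_monom_eq)
  have "degree r < k"
  proof (cases "r = 0")
    case False
    then show ?thesis
      using degree_mod_less'[of m p] \<open>degree m = k\<close> assms(1) by (fastforce simp: r_def)
  qed (use assms(1) in simp)
  have "poly (map_poly of_rat r) z = 0" if "z ^ k = 1" for z :: complex
  proof -
    have "map_poly of_rat p = map_poly of_rat m * map_poly of_rat (p div m) + (map_poly of_rat r :: complex poly)"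
      unfolding r_def by (metis map_poly_of_rat_add map_poly_of_rat_mult div_mult_mod_eq mult.commute)
    moreover have "poly (map_poly of_rat m) z = 0"
      using that by (simp add: m_def map_poly_of_rat_diff map_poly_monom poly_monom)
    ultimately show ?thesis
      using vanishes[OF that] by simp
  qed
  then have "map_poly (of_rat :: rat \<Rightarrow> complex) r = 0"
    using assms(1) \<open>degree r < k\<close>
    by (intro poly_eqI_degree[where A = "{z. z ^ k = 1}"]) (auto simp: card_roots_unity_eq degree_map_poly)
  then have "r = 0"
    by (simp add: map_poly_eq_0_iff)
  then show ?thesis
    by (simp add: r_def m_def mod_eq_0_iff_dvd)
qed

lemma power_mod_eq_if_idempotent_mod:
  fixes e m :: "'a::euclidean_semiring_cancel"
  assumes "e ^ 2 mod m = e mod m" and "n \<ge> 1"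
  shows "e ^ n mod m = e mod m"
  using assms(2)
proof (induction n rule: dec_induct)
  case (step n)
  have "e ^ Suc n mod m = e * (e ^ n mod m) mod m"
    by (simp add: mod_mult_right_eq)
  also have "\<dots> = e * (e mod m) mod m"
    using step.IH by simp
  also have "\<dots> = e mod m"
    using assms(1) by (simp add: mod_mult_right_eq power2_eq_square)
  finally show ?case .
qed simp

lemma poly_map_poly_of_rat_qpoch:
  "poly (map_poly of_rat (qpoch m)) (z :: 'a::field_char_0) = (\<Prod>i\<in>{1..m}. 1 - z ^ i)"
  unfolding qpoch_def map_poly_of_rat_prod
  by (simp add: map_poly_of_rat_diff map_poly_monom poly_prod poly_monom)

lemma one_minus_monom_dvd_qpoch_sq_diff:
  assumes "k \<ge> 1"
  shows "(1 - monom 1 k) dvd qpoch (k - 1) ^ 2 - smult (of_nat k) (qpoch (k - 1))"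
proof (rule one_minus_monom_dvd_if_vanishes_at_roots_of_unity[OF assms])
  fix z :: complex
  assume "z ^ k = 1"
  then show "poly (map_poly of_rat (qpoch (k - 1) ^ 2 - smult (of_nat k) (qpoch (k - 1)))) z = 0"
    using prod_one_minus_root_of_unity_powers_sq[OF assms, of z]
    by (simp only: power2_eq_square map_poly_of_rat_diff map_poly_of_rat_mult map_poly_of_rat_smult
        poly_diff poly_mult poly_smult poly_map_poly_of_rat_qpoch of_rat_of_nat_eq) simp
qed

lemma scaled_qpoch_idempotent_mod:
  assumes "k \<ge> 1"
  shows "smult (1 / of_nat k) (qpoch (k - 1)) ^ 2 mod (1 - monom 1 k)
    = smult (1 / of_nat k) (qpoch (k - 1)) mod (1 - monom 1 k)"
proof -
  have "(1 / of_nat k) ^ 2 * of_nat k = (1 / of_nat k :: rat)"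
    using assms by (simp add: power2_eq_square)
  then have "smult (1 / of_nat k) (qpoch (k - 1)) ^ 2 - smult (1 / of_nat k) (qpoch (k - 1))
    = smult ((1 / of_nat k) ^ 2) (qpoch (k - 1) ^ 2 - smult (of_nat k) (qpoch (k - 1)))"
    by (simp only: smult_power smult_diff_right smult_smult)
  moreover have "(1 - monom 1 k) dvd smult ((1 / of_nat k) ^ 2) (qpoch (k - 1) ^ 2 - smult (of_nat k) (qpoch (k - 1)))"
    using one_minus_monom_dvd_qpoch_sq_diff[OF assms] by (rule dvd_smult)
  ultimately show ?thesis
    by (simp only: mod_eq_dvd_iff)
qed

lemma Rrem_eq_scaled_qpoch_power_mod:
  "Rrem b k s = smult (1 / of_nat k) (qpoch (k - 1)) ^ b * qpoch (s - 1) mod (1 - monom 1 k)"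
  unfolding Rrem_def by (simp only: smult_power power_one_over mult_smult_left)

lemma Rrem_eq_Rrem_1:
  assumes "b \<ge> 1" and "k \<ge> 1"
  shows "Rrem b k s = Rrem 1 k s"
proof -
  have "smult (1 / of_nat k) (qpoch (k - 1)) ^ b mod (1 - monom 1 k)
    = smult (1 / of_nat k) (qpoch (k - 1)) ^ 1 mod (1 - monom 1 k)"
    using power_mod_eq_if_idempotent_mod[OF scaled_qpoch_idempotent_mod[OF assms(2)] assms(1)]
    by simp
  then show ?thesis
    unfolding Rrem_eq_scaled_qpoch_power_mod by (rule mod_mult_cong) (rule refl)
qed

theorem corollary2p7:
  fixes b k s :: nat and t :: int
  assumes "b \<ge> 1" and "k \<ge> 1" and "1 \<le> s" and "s \<le> k"
  shows "sigma (b + 1) k t s = sigma b k t s"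
  using Rrem_eq_Rrem_1[of "b + 1" k s] Rrem_eq_Rrem_1[of b k s] assms(1,2)
  by (simp add: sigma_def)

end
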